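(* Let $G$ be a connected finite simple undirected graph and let $W:V_G\to\mathbb{R}$ be a single-basin potential. Let $\psi$ be the ground state of $H_{G,W}$ (chosen with $\psi(x)>0$ for all $x$), and let $$S[\psi]=\{x\in V_G : \Delta^2\psi(x)<0\},\qquad \Delta^2\psi(x)=-d_x\psi(x)+\sum_{y\in N_x}\psi(y).$$ Then $S[\psi]$ is a connected set of vertices in $G$.
   Context: For a finite simple undirected graph $G$ with vertex set $V_G$, let $\mathcal{H}_G$ be the complex Hilbert space with orthonormal basis $\{|x\rangle : x\in V_G\}$. The graph Laplacian is $L_G=\sum_{x} d_x |x\rangle\langle x| - \sum_{x\sim y}|x\rangle\langle y|$, where $d_x$ is the degree of $x$, $N_x$ is the set of neighbors of $x$, and the second sum runs over ordered pairs of adjacent vertices. For a potential $W:V_G\to\mathbb{R}$, $H_{G,W}=L_G+\sum_{x} W(x)|x\rangle\langle x|$. For connected $G$ the ground state is nondegenerate and can be chosen with strictly positive amplitudes $\psi(x)$ (Perron–Frobenius). A potential $W$ is single-basin if for every real number $E$ the set $\{x\in V_G : W(x)<E\}$ is a connected set of vertices in $G$ (induces a connected subgraph). *)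

theory Defs
  imports Complex_Main
begin

definition simple_graph :: "'a set \<Rightarrow> ('a \<Rightarrow> 'a \<Rightarrow> bool) \<Rightarrow> bool" where
  "simple_graph V E \<longleftrightarrow> finite V \<and> (\<forall>x y. E x y \<longrightarrow> x \<in> V \<and> y \<in> V)
     \<and> (\<forall>x y. E x y \<longrightarrow> E y x) \<and> (\<forall>x. \<not> E x x)"

definition nbrs :: "'a set \<Rightarrow> ('a \<Rightarrow> 'a \<Rightarrow> bool) \<Rightarrow> 'a \<Rightarrow> 'a set" where
  "nbrs V E x = {y \<in> V. E x y}"

definition deg :: "'a set \<Rightarrow> ('a \<Rightarrow> 'a \<Rightarrow> bool) \<Rightarrow> 'a \<Rightarrow> nat" where
  "deg V E x = card (nbrs V E x)"

text \<open>A set S of vertices is connected if it induces a connected subgraph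
  (any two vertices of S are joined by a path inside S; the empty set counts as connected).\<close>
definition connected_set :: "'a set \<Rightarrow> ('a \<Rightarrow> 'a \<Rightarrow> bool) \<Rightarrow> 'a set \<Rightarrow> bool" where
  "connected_set V E S \<longleftrightarrow> S \<subseteq> V \<and>
     (\<forall>x\<in>S. \<forall>y\<in>S. (\<lambda>a b. a \<in> S \<and> b \<in> S \<and> E a b)\<^sup>*\<^sup>* x y)"

definition connected_graph :: "'a set \<Rightarrow> ('a \<Rightarrow> 'a \<Rightarrow> bool) \<Rightarrow> bool" where
  "connected_graph V E \<longleftrightarrow> V \<noteq> {} \<and> connected_set V E V"

definition single_basin :: "'a set \<Rightarrow> ('a \<Rightarrow> 'a \<Rightarrow> bool) \<Rightarrow> ('a \<Rightarrow> real) \<Rightarrow> bool" where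
  "single_basin V E W \<longleftrightarrow> (\<forall>c::real. connected_set V E {x \<in> V. W x < c})"

definition hamiltonian :: "'a set \<Rightarrow> ('a \<Rightarrow> 'a \<Rightarrow> bool) \<Rightarrow> ('a \<Rightarrow> real)
    \<Rightarrow> ('a \<Rightarrow> complex) \<Rightarrow> 'a \<Rightarrow> complex" where
  "hamiltonian V E W f x =
     complex_of_real (real (deg V E x) + W x) * f x - (\<Sum>y\<in>nbrs V E x. f y)"

definition eigenpair :: "'a set \<Rightarrow> ('a \<Rightarrow> 'a \<Rightarrow> bool) \<Rightarrow> ('a \<Rightarrow> real)
    \<Rightarrow> complex \<Rightarrow> ('a \<Rightarrow> complex) \<Rightarrow> bool" where
  "eigenpair V E W \<mu> f \<longleftrightarrow> (\<exists>x\<in>V. f x \<noteq> 0) \<and>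
     (\<forall>x\<in>V. hamiltonian V E W f x = \<mu> * f x)"

text \<open>psi is the (positive) ground state: a strictly positive eigenvector of H for the
  lowest eigenvalue (H is Hermitian, so all eigenvalues are real).\<close>
definition positive_ground_state :: "'a set \<Rightarrow> ('a \<Rightarrow> 'a \<Rightarrow> bool) \<Rightarrow> ('a \<Rightarrow> real)
    \<Rightarrow> ('a \<Rightarrow> real) \<Rightarrow> bool" where
  "positive_ground_state V E W \<psi> \<longleftrightarrow> (\<forall>x\<in>V. \<psi> x > 0) \<and>
     (\<exists>e0::real. eigenpair V E W (complex_of_real e0) (\<lambda>x. complex_of_real (\<psi> x)) \<and>
        (\<forall>\<mu> f. eigenpair V E W \<mu> f \<longrightarrow> e0 \<le> Re \<mu>))"

definition disc_lap :: "'a set \<Rightarrow> ('a \<Rightarrow> 'a \<Rightarrow> bool) \<Rightarrow> ('a \<Rightarrow> real) \<Rightarrow> 'a \<Rightarrow> real" where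
  "disc_lap V E \<psi> x = - real (deg V E x) * \<psi> x + (\<Sum>y\<in>nbrs V E x. \<psi> y)"

end

theory Submission
  imports Defs
begin

text \<open>The eigenvalue equation \<open>H\<psi> = e\<^sub>0\<psi>\<close> says precisely that
  \<open>\<Delta>\<^sup>2\<psi>(x) = (W(x) - e\<^sub>0)\<psi>(x)\<close>. Since \<open>\<psi>\<close> is positive, \<open>S[\<psi>]\<close> is therefore the
  sublevel set \<open>{x. W(x) < e\<^sub>0}\<close>, which is connected because \<open>W\<close> is single-basin.\<close>

lemma disc_lap_eq_of_eigenpair:
  assumes "eigenpair V E W (complex_of_real e) (\<lambda>x. complex_of_real (f x))"
    and "x \<in> V"
  shows "disc_lap V E f x = (W x - e) * f x"
proof -
  have "Re (hamiltonian V E W (\<lambda>x. complex_of_real (f x)) x) = e * f x"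
    using assms unfolding eigenpair_def by simp
  then have "(real (deg V E x) + W x) * f x - (\<Sum>y\<in>nbrs V E x. f y) = e * f x"
    unfolding hamiltonian_def by (simp add: Re_sum)
  then show ?thesis
    unfolding disc_lap_def by (simp add: algebra_simps)
qed

lemma negative_disc_lap_eq_sublevel:
  assumes "eigenpair V E W (complex_of_real e) (\<lambda>x. complex_of_real (f x))"
    and "\<forall>x\<in>V. f x > 0"
  shows "{x \<in> V. disc_lap V E f x < 0} = {x \<in> V. W x < e}"
  using assms disc_lap_eq_of_eigenpair[OF assms(1)] by (auto simp: mult_less_0_iff)

theorem proposition5:
  fixes V :: "'a set" and E :: "'a \<Rightarrow> 'a \<Rightarrow> bool"
    and W :: "'a \<Rightarrow> real" and \<psi> :: "'a \<Rightarrow> real"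
  assumes "simple_graph V E"
    and "connected_graph V E"
    and "single_basin V E W"
    and "positive_ground_state V E W \<psi>"
  shows "connected_set V E {x \<in> V. disc_lap V E \<psi> x < 0}"
proof -
  obtain e0 :: real
    where "eigenpair V E W (complex_of_real e0) (\<lambda>x. complex_of_real (\<psi> x))"
      and "\<forall>x\<in>V. \<psi> x > 0"
    using assms(4) unfolding positive_ground_state_def by blast
  then have "{x \<in> V. disc_lap V E \<psi> x < 0} = {x \<in> V. W x < e0}"
    by (rule negative_disc_lap_eq_sublevel)
  then show ?thesis
    using assms(3) unfolding single_basin_def by simp
qed

end
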